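(* Let $S(n)=(3n+1)/2^{v_2(3n+1)}$ be the odd-to-odd Syracuse map. Let $n=64q+57$ with $q\equiv 3\pmod 8$, and write $q=8m+3$ ($m\ge 0$ an integer), so $n=512m+249$. Then $S^k(n)\not\equiv 57\pmod{64}$ for $k=1,2,3,4$. Consequently, the minimum number of odd-to-odd steps needed to return to the residue class $57\bmod 64$ from this branch is at least $5$.
   Context: $v_2$ is the $2$-adic valuation; $S^k$ is the $k$-th iterate. *)

theory Defs
  imports "HOL-Computational_Algebra.Primes"
begin

definition v2 :: "nat \<Rightarrow> nat" where
  "v2 x = multiplicity (2::nat) x"

definition syracuse :: "nat \<Rightarrow> nat" where
  "syracuse n = (3 * n + 1) div 2 ^ v2 (3 * n + 1)"

end

theory Submission
  imports Defs
begin

(* Along this branch v2(3x+1) takes the values 2, 1, 2, 1, so the orbit is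
   512m+249 -> 384m+187 -> 576m+281 -> 432m+211 -> 648m+317.
   Since 57 = 1 (mod 8), the residues 3, 3, 5 mod 8 of the first, third and fourth iterate
   rule them out, and the second iterate is 25 mod 64. *)

lemma syracuse_eqI:
  assumes "3 * n + 1 = 2 ^ j * r" and "odd r"
  shows "syracuse n = r"
proof -
  have "\<not> 2 ^ Suc j dvd 2 ^ j * r"
    using assms(2) by (simp add: mult.commute[of 2] nat_mult_dvd_cancel_disj)
  then have "v2 (3 * n + 1) = j"
    unfolding v2_def assms(1) by (intro multiplicity_eqI) auto
  then show ?thesis
    unfolding syracuse_def assms(1) by simp
qed

lemma mod_mult_add_eq_of_dvd:
  fixes a b d m :: nat
  assumes "d dvd a"
  shows "(a * m + b) mod d = b mod d"
  using assms by (auto elim!: dvdE simp: mult.assoc)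

lemma syracuse_steps_512m_249:
  fixes m :: nat
  shows "syracuse (512 * m + 249) = 384 * m + 187"
    and "syracuse (384 * m + 187) = 576 * m + 281"
    and "syracuse (576 * m + 281) = 432 * m + 211"
    and "syracuse (432 * m + 211) = 648 * m + 317"
proof -
  show "syracuse (512 * m + 249) = 384 * m + 187"
    by (rule syracuse_eqI[where j = 2]) simp_all
  show "syracuse (384 * m + 187) = 576 * m + 281"
    by (rule syracuse_eqI[where j = 1]) simp_all
  show "syracuse (576 * m + 281) = 432 * m + 211"
    by (rule syracuse_eqI[where j = 2]) simp_all
  show "syracuse (432 * m + 211) = 648 * m + 317"
    by (rule syracuse_eqI[where j = 1]) simp_all
qed

lemma syracuse_orbit_512m_249:
  fixes m :: nat
  shows "(syracuse ^^ 1) (512 * m + 249) = 384 * m + 187"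
    and "(syracuse ^^ 2) (512 * m + 249) = 576 * m + 281"
    and "(syracuse ^^ 3) (512 * m + 249) = 432 * m + 211"
    and "(syracuse ^^ 4) (512 * m + 249) = 648 * m + 317"
proof -
  have iterates: "(f ^^ 1) x = f x" "(f ^^ 2) x = f (f x)"
    "(f ^^ 3) x = f (f (f x))" "(f ^^ 4) x = f (f (f (f x)))" for f :: "nat \<Rightarrow> nat" and x
    by (simp_all add: numeral_eq_Suc)
  show "(syracuse ^^ 1) (512 * m + 249) = 384 * m + 187"
    and "(syracuse ^^ 2) (512 * m + 249) = 576 * m + 281"
    and "(syracuse ^^ 3) (512 * m + 249) = 432 * m + 211"
    and "(syracuse ^^ 4) (512 * m + 249) = 648 * m + 317"
    by (simp_all only: iterates syracuse_steps_512m_249)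
qed

lemma syracuse_orbit_512m_249_not_57_mod_64:
  fixes m :: nat
  shows "(syracuse ^^ 1) (512 * m + 249) mod 64 \<noteq> 57"
    and "(syracuse ^^ 2) (512 * m + 249) mod 64 \<noteq> 57"
    and "(syracuse ^^ 3) (512 * m + 249) mod 64 \<noteq> 57"
    and "(syracuse ^^ 4) (512 * m + 249) mod 64 \<noteq> 57"
proof -
  have not_57: "x mod 64 \<noteq> 57" if "x mod 8 \<noteq> 1" for x :: nat
    using that by (auto simp: mod_mod_cancel[of 8 64 x, symmetric])
  show "(syracuse ^^ 1) (512 * m + 249) mod 64 \<noteq> 57"
    unfolding syracuse_orbit_512m_249 by (rule not_57) (simp add: mod_mult_add_eq_of_dvd)
  show "(syracuse ^^ 2) (512 * m + 249) mod 64 \<noteq> 57"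
    unfolding syracuse_orbit_512m_249 by (simp add: mod_mult_add_eq_of_dvd)
  show "(syracuse ^^ 3) (512 * m + 249) mod 64 \<noteq> 57"
    unfolding syracuse_orbit_512m_249 by (rule not_57) (simp add: mod_mult_add_eq_of_dvd)
  show "(syracuse ^^ 4) (512 * m + 249) mod 64 \<noteq> 57"
    unfolding syracuse_orbit_512m_249 by (rule not_57) (simp add: mod_mult_add_eq_of_dvd)
qed

theorem mainTheorem7:
  fixes m q n :: nat
  assumes "n = 64 * q + 57" and "q mod 8 = 3" and "q = 8 * m + 3"
  shows "n = 512 * m + 249
    \<and> (\<forall>k\<in>{1..4::nat}. (syracuse ^^ k) n mod 64 \<noteq> 57)
    \<and> (\<forall>k::nat. 0 < k \<and> (syracuse ^^ k) n mod 64 = 57 \<longrightarrow> 5 \<le> k)"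
proof -
  have n: "n = 512 * m + 249"
    using assms(1,3) by simp
  have avoid: "\<forall>k\<in>{1..4::nat}. (syracuse ^^ k) n mod 64 \<noteq> 57"
  proof
    fix k :: nat
    assume "k \<in> {1..4}"
    then have "k = 1 \<or> k = 2 \<or> k = 3 \<or> k = 4" by fastforce
    then show "(syracuse ^^ k) n mod 64 \<noteq> 57"
      unfolding n using syracuse_orbit_512m_249_not_57_mod_64 by (elim disjE) simp_all
  qed
  have "5 \<le> k" if "0 < k" and "(syracuse ^^ k) n mod 64 = 57" for k :: nat
  proof (rule ccontr)
    assume "\<not> 5 \<le> k"
    with that(1) have "k \<in> {1..4}" by simp
    with avoid that(2) show False by simp
  qed
  with n avoid show ?thesis by simp
qed

end
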